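(* Let $X=(x_{ij})$ be an $n\times n$ alternating matrix of indeterminates over $\mathbb{Z}$, with $n\geqslant4$ even. Set $S=\mathbb{Z}[X]$ and $R=S/(\operatorname{pf}X)$. Fix a prime $p>0$ and let $\varphi_p$ be the standard $p$-derivation on $S$ with respect to the indeterminates $x_{ij}$, $i<j$. Then \[ \left[\frac{\varphi_p(\operatorname{pf}X)}{(x_{12}\cdots x_{1n})^p}\right]\in H^{n-1}_{(x_{12},\dots,x_{1n})}(R) \] is a nonzero $p$-torsion element, and its image in $H^{n-1}_{(x_{12},\dots,x_{1n})}(R/pR)$ is nonzero. In particular, $H^{n-1}_{(x_{12},\dots,x_{1n})}(R)$ contains a nonzero $p$-torsion element for each prime $p>0$.
   Context: $\operatorname{pf}X$ is the Pfaffian of $X$. For a polynomial ring $S=\mathbb{Z}[\boldsymbol{x}]$, the standard lift of Frobenius $\Lambda_p$ is the ring endomorphism with $\Lambda_p(x)=x^p$ for each indeterminate $x$, and the standard $p$-derivation is $\varphi_p(s)=(\Lambda_p(s)-s^p)/p$. The local cohomology class is the Čech class of the image of $\varphi_p(\operatorname{pf}X)$ in $R$. *)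

theory Defs
  imports "HOL-Library.Poly_Mapping" "HOL-Computational_Algebra.Primes" "HOL-Combinatorics.Permutations"
begin

text \<open>S = Z[x_ij] : polynomials over int in variables indexed by pairs (i,j) (0-based, i<j).\<close>

type_synonym mono = "(nat \<times> nat) \<Rightarrow>\<^sub>0 nat"
type_synonym zpoly = "mono \<Rightarrow>\<^sub>0 int"

definition Xvar :: "nat \<Rightarrow> nat \<Rightarrow> zpoly" where
  "Xvar i j = Poly_Mapping.single (Poly_Mapping.single (i, j) 1) 1"

text \<open>Pfaffian of the generic n\<times>n alternating matrix (entries x_ij for i<j, -x_ji for i>j),
  indices 0..n-1: sum over permutations with sigma(2k)<sigma(2k+1) and
  sigma(0)<sigma(2)<...<sigma(n-2) of sgn(sigma) * prod_k x_{sigma(2k),sigma(2k+1)}.\<close>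

definition pfaff_perms :: "nat \<Rightarrow> (nat \<Rightarrow> nat) set" where
  "pfaff_perms n = {\<sigma>. \<sigma> permutes {..<n} \<and>
      (\<forall>k < n div 2. \<sigma> (2*k) < \<sigma> (2*k+1)) \<and>
      (\<forall>k. k + 1 < n div 2 \<longrightarrow> \<sigma> (2*k) < \<sigma> (2*k+2))}"

definition pfX :: "nat \<Rightarrow> zpoly" where
  "pfX n = (\<Sum>\<sigma>\<in>pfaff_perms n. of_int (sign \<sigma>) *
              (\<Prod>k<n div 2. Xvar (\<sigma> (2*k)) (\<sigma> (2*k+1))))"

text \<open>Standard lift of Frobenius: the ring endomorphism x \<mapsto> x^p, i.e.
  sum c_m x^m \<mapsto> sum c_m x^(p m).\<close>

definition frob_lift :: "nat \<Rightarrow> zpoly \<Rightarrow> zpoly" where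
  "frob_lift p f = (\<Sum>m\<in>Poly_Mapping.keys f.
      Poly_Mapping.single (Poly_Mapping.map (\<lambda>e. p * e) m) (Poly_Mapping.lookup f m))"

text \<open>Standard p-derivation: (Lambda_p(s) - s^p)/p (exact division, coefficientwise).\<close>

definition p_deriv :: "nat \<Rightarrow> zpoly \<Rightarrow> zpoly" where
  "p_deriv p s = Poly_Mapping.map (\<lambda>c. c div int p) (frob_lift p s - s ^ p)"

definition in_ideal :: "zpoly list \<Rightarrow> zpoly \<Rightarrow> bool" where
  "in_ideal gs f \<longleftrightarrow> (\<exists>c. f = (\<Sum>i<length gs. c i * gs ! i))"

text \<open>Let A = S/(rels). For y = y_1..y_m in S, the Cech class [f/(y_1...y_m)^s] in the top
  Cech cohomology H^m_(y)(A) = A_{y_1...y_m} / sum_i image(A_{y_1..^y_i..y_m}) vanishes iff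
  for some t, (y_1...y_m)^t f lies in (y_1^(s+t),...,y_m^(s+t))A, i.e. in the ideal of S
  generated by rels and the y_i^(s+t).\<close>

definition cech_class_zero :: "zpoly list \<Rightarrow> zpoly list \<Rightarrow> zpoly \<Rightarrow> nat \<Rightarrow> bool" where
  "cech_class_zero rels ys f s \<longleftrightarrow>
     (\<exists>t. in_ideal (rels @ map (\<lambda>y. y ^ (s + t)) ys) (prod_list ys ^ t * f))"

end

theory Submission
  imports Defs
begin

text \<open>
  Indices start at 0, so the ideal of the theorem is generated by x_01, ..., x_0(n-1);
  let Y be their product. Put T = x_45 x_67 ... x_(n-2)(n-1) and A = x_01 x_23 T,
  B = x_02 x_13 T, C = x_03 x_12 T. These are the only terms of pf X all of whose variables
  occur in Y A B C, and they occur with the signs +, -, +. Writing [m] G for the coefficient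
  of the monomial m in G, the Z-linear functional

    lambda_t G = sum_(b <= p) b [Y^t B^b C^(p-b)] G + sum_(b < p) [Y^t A B^b C^(p-1-b)] G

  vanishes on the ideal (pf X), since the contributions of A, -B and C to lambda_t (F pf X)
  cancel, and it is divisible by p on multiples of p and of x_0j^(p+t). On the other hand the
  only term of Lambda_p(pf X) seen by lambda_0 is -B^p, so
  p lambda_t (Y^t phi_p(pf X)) = lambda_0 (Lambda_p(pf X)) - lambda_0 (pf X^p) = -p.
  Hence Y^t phi_p(pf X) never lies in (pf X, p, x_0j^(p+t)): the class is nonzero, even
  modulo p. It is killed by p, because p phi_p(pf X) = Lambda_p(pf X) - pf X^p and every term
  of Lambda_p(pf X) is divisible by some x_0j^p.
\<close>

section \<open>Monomials and coefficients\<close>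

lemma lookup_mult_single:
  fixes F :: "'k::cancel_comm_monoid_add \<Rightarrow>\<^sub>0 'b::comm_semiring_1"
  shows "Poly_Mapping.lookup (F * Poly_Mapping.single a c) m
           = (\<Sum>l. Poly_Mapping.lookup F l * c when m = l + a)"
proof -
  have "(\<Sum>q. x when a = q \<and> m = l + q) = (x when m = l + a)" for x :: 'b and l
  proof -
    have "(\<lambda>q. x when a = q \<and> m = l + q) = (\<lambda>q. if a = q then (x when m = l + q) else 0)"
      by (auto simp: when_def fun_eq_iff)
    then show ?thesis by (simp only: Sum_any.delta')
  qed
  then show ?thesis
    by (simp add: lookup_mult lookup_single when_mult mult_when Sum_any_right_distrib when_when)
qed

lemma lookup_mult_single_add:
  fixes F :: "'k::cancel_comm_monoid_add \<Rightarrow>\<^sub>0 'b::comm_semiring_1"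
  shows "Poly_Mapping.lookup (F * Poly_Mapping.single a c) (m + a) = Poly_Mapping.lookup F m * c"
  by (simp add: lookup_mult_single eq_commute[of "m + a"])

lemma lookup_mult_single_eq_zero:
  fixes F :: "('k \<Rightarrow>\<^sub>0 nat) \<Rightarrow>\<^sub>0 'b::comm_semiring_1"
  assumes "Poly_Mapping.lookup m k < Poly_Mapping.lookup a k"
  shows "Poly_Mapping.lookup (F * Poly_Mapping.single a c) m = 0"
proof -
  have "m \<noteq> l + a" for l
    using assms by (auto simp: lookup_add)
  then show ?thesis
    by (simp add: lookup_mult_single)
qed

lemma lookup_of_nat_mult:
  "Poly_Mapping.lookup ((of_nat d :: 'k::comm_monoid_add \<Rightarrow>\<^sub>0 int) * G) m
     = int d * Poly_Mapping.lookup G m"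
  by (simp add: map.rep_eq when_def flip: mult_map_scale_conv_mult single_of_nat)

definition mono_scale :: "nat \<Rightarrow> ('k \<Rightarrow>\<^sub>0 nat) \<Rightarrow> 'k \<Rightarrow>\<^sub>0 nat" where
  "mono_scale t m = Poly_Mapping.map ((*) t) m"

lemma lookup_mono_scale [simp]:
  "Poly_Mapping.lookup (mono_scale t m) k = t * Poly_Mapping.lookup m k"
  by (simp add: mono_scale_def map.rep_eq when_def)

lemma mono_scale_0 [simp]: "mono_scale 0 m = 0"
  by (rule poly_mapping_eqI) simp

lemma mono_scale_Suc: "mono_scale (Suc t) m = mono_scale t m + m"
  by (rule poly_mapping_eqI) (simp add: lookup_add)

lemma mono_scale_add_right: "mono_scale t (a + b) = mono_scale t a + mono_scale t b"
  by (rule poly_mapping_eqI) (simp add: lookup_add algebra_simps)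

lemma mono_scale_single: "mono_scale t (Poly_Mapping.single k e) = Poly_Mapping.single k (t * e)"
  by (rule poly_mapping_eqI) (simp add: lookup_single when_def)

lemma mono_scale_inj: "t > 0 \<Longrightarrow> mono_scale t a = mono_scale t b \<longleftrightarrow> a = b"
  by (auto simp: poly_mapping_eq_iff fun_eq_iff)

lemma single_power:
  "Poly_Mapping.single m (c::'b::comm_semiring_1) ^ t = Poly_Mapping.single (mono_scale t m) (c ^ t)"
  by (induction t) (simp_all add: mult_single mono_scale_Suc add.commute)

lemma Xvar_power: "Xvar i j ^ e = Poly_Mapping.single (Poly_Mapping.single (i, j) e) 1"
  by (simp add: Xvar_def single_power mono_scale_single)

lemma prod_single_one:
  "(\<Prod>k\<in>K. Poly_Mapping.single (f k) (1::'b::comm_semiring_1))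
     = Poly_Mapping.single (\<Sum>k\<in>K. f k) 1"
  by (induction K rule: infinite_finite_induct) (simp_all add: mult_single)

section \<open>The Frobenius lift and the p-derivation\<close>

lemma prime_dvd_power_add:
  fixes x y :: "'a::comm_ring_1"
  assumes "prime p"
  shows "of_nat p dvd (x + y) ^ p - x ^ p - y ^ p"
proof -
  have p: "p > 0" using assms prime_gt_0_nat by blast
  have "(x + y) ^ p = (\<Sum>k\<le>p. of_nat (p choose k) * x ^ k * y ^ (p - k))"
    by (rule binomial_ring)
  also have "\<dots> = (\<Sum>k\<in>{1..<p}. of_nat (p choose k) * x ^ k * y ^ (p - k)) + x ^ p + y ^ p"
  proof -
    have "{..p} = insert 0 (insert p {1..<p})" using p by auto
    then show ?thesis using p by (simp add: algebra_simps)
  qed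
  finally have "(x + y) ^ p - x ^ p - y ^ p = (\<Sum>k\<in>{1..<p}. of_nat (p choose k) * x ^ k * y ^ (p - k))"
    by simp
  moreover have "of_nat p dvd (of_nat (p choose k) :: 'a)" if "k \<in> {1..<p}" for k
  proof -
    have "p dvd (p choose k)" using dvd_choose_prime[of k p] that assms by auto
    then show ?thesis by (metis dvd_def of_nat_mult)
  qed
  ultimately show ?thesis
    by (auto intro!: dvd_sum dvd_mult2)
qed

lemma frob_lift_add: "frob_lift p (a + b) = frob_lift p a + frob_lift p b"
  unfolding frob_lift_def by (rule setsum_keys_plus_distrib) (simp_all add: single_add)

lemma frob_lift_diff: "frob_lift p (a - b) = frob_lift p a - frob_lift p b"
  using frob_lift_add[of p "a - b" b] by (simp add: eq_diff_eq)

lemma frob_lift_0 [simp]: "frob_lift p 0 = 0"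
  by (simp add: frob_lift_def)

lemma frob_lift_sum: "frob_lift p (\<Sum>a\<in>A. f a) = (\<Sum>a\<in>A. frob_lift p (f a))"
  by (induction A rule: infinite_finite_induct) (simp_all add: frob_lift_add)

lemma frob_lift_single:
  "frob_lift p (Poly_Mapping.single m c) = Poly_Mapping.single (mono_scale p m) c"
  by (cases "c = 0") (simp_all add: frob_lift_def mono_scale_def)

lemma prime_dvd_frob_lift_sub_power:
  assumes "prime p"
  shows "of_nat p dvd frob_lift p s - s ^ p"
  using subset_UNIV
proof (induction s rule: frag_induction)
  case zero
  then show ?case using assms prime_gt_0_nat by (simp add: power_0_left)
next
  case (one m)
  then show ?case by (simp add: frob_lift_single single_power)
next
  case (diff a b)
  have "frob_lift p (a - b) - (a - b) ^ p
          = (frob_lift p a - a ^ p) - (frob_lift p b - b ^ p) + (a ^ p - (a - b) ^ p - b ^ p)"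
    by (simp add: frob_lift_diff algebra_simps)
  moreover have "of_nat p dvd a ^ p - (a - b) ^ p - b ^ p"
    using prime_dvd_power_add[OF assms, of "a - b" b] by simp
  ultimately show ?case using diff by (metis dvd_add dvd_diff)
qed

lemma of_nat_mult_p_deriv:
  assumes "prime p"
  shows "of_nat p * p_deriv p s = frob_lift p s - s ^ p"
proof -
  obtain h where h: "frob_lift p s - s ^ p = of_nat p * h"
    using prime_dvd_frob_lift_sub_power[OF assms] by blast
  have "p_deriv p s = h"
    using assms prime_gt_0_nat
    by (auto simp: poly_mapping_eq_iff p_deriv_def h map.rep_eq lookup_of_nat_mult when_def)
  then show ?thesis using h by simp
qed

section \<open>Ideal membership and Cech classes\<close>

lemma in_ideal_0: "in_ideal gs 0"
  unfolding in_ideal_def by (rule exI[of _ "\<lambda>_. 0"]) simp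

lemma in_ideal_add:
  assumes "in_ideal gs f" "in_ideal gs g"
  shows "in_ideal gs (f + g)"
proof -
  obtain c d where "f = (\<Sum>i<length gs. c i * gs ! i)" "g = (\<Sum>i<length gs. d i * gs ! i)"
    using assms unfolding in_ideal_def by blast
  then have "f + g = (\<Sum>i<length gs. (c i + d i) * gs ! i)"
    by (simp add: distrib_right sum.distrib)
  then show ?thesis
    unfolding in_ideal_def by (intro exI[of _ "\<lambda>i. c i + d i"])
qed

lemma in_ideal_mult_member:
  assumes "g \<in> set gs"
  shows "in_ideal gs (c * g)"
proof -
  obtain i where i: "i < length gs" "gs ! i = g"
    using assms by (auto simp: in_set_conv_nth)
  have "(\<Sum>k<length gs. (if k = i then c else 0) * gs ! k)
          = (\<Sum>k<length gs. if k = i then c * gs ! k else 0)"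
    by (rule sum.cong) auto
  also have "\<dots> = c * g"
    using i by simp
  finally have "c * g = (\<Sum>k<length gs. (if k = i then c else 0) * gs ! k)" ..
  then show ?thesis
    unfolding in_ideal_def by (intro exI[of _ "\<lambda>k. if k = i then c else 0"])
qed

lemma in_ideal_sum: "(\<And>a. a \<in> A \<Longrightarrow> in_ideal gs (f a)) \<Longrightarrow> in_ideal gs (\<Sum>a\<in>A. f a)"
  by (induction A rule: infinite_finite_induct) (simp_all add: in_ideal_0 in_ideal_add)

lemma in_ideal_dvd_functional:
  fixes L :: "zpoly \<Rightarrow> int"
  assumes "in_ideal gs f"
    and L_add: "\<And>a b. L (a + b) = L a + L b"
    and "\<And>F g. g \<in> set gs \<Longrightarrow> d dvd L (F * g)"
  shows "d dvd L f"
proof -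
  have L_sum: "L (\<Sum>i\<in>I. h i) = (\<Sum>i\<in>I. L (h i))" for I and h :: "nat \<Rightarrow> zpoly"
  proof (induction I rule: infinite_finite_induct)
    case (infinite I)
    then show ?case using L_add[of 0 0] by simp
  next
    case empty
    then show ?case using L_add[of 0 0] by simp
  next
    case (insert i I)
    then show ?case by (simp add: L_add)
  qed
  obtain c where "f = (\<Sum>i<length gs. c i * gs ! i)"
    using assms(1) unfolding in_ideal_def by blast
  moreover have "d dvd L (c i * gs ! i)" if "i < length gs" for i
    using assms(3) that by (simp add: nth_mem)
  ultimately show ?thesis
    by (auto simp: L_sum intro!: dvd_sum)
qed

lemma not_cech_class_zero_by_functional:
  fixes L :: "nat \<Rightarrow> zpoly \<Rightarrow> int"
  assumes L_add: "\<And>t a b. L t (a + b) = L t a + L t b"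
    and rels: "\<And>t F g. g \<in> set rels \<Longrightarrow> d dvd L t (F * g)"
    and powers: "\<And>t F y. y \<in> set ys \<Longrightarrow> d dvd L t (F * y ^ (s + t))"
    and witness: "\<And>t. \<not> d dvd L t (prod_list ys ^ t * f)"
  shows "\<not> cech_class_zero rels ys f s"
  unfolding cech_class_zero_def
proof
  assume "\<exists>t. in_ideal (rels @ map (\<lambda>y. y ^ (s + t)) ys) (prod_list ys ^ t * f)"
  then obtain t where t: "in_ideal (rels @ map (\<lambda>y. y ^ (s + t)) ys) (prod_list ys ^ t * f)"
    by blast
  have "d dvd L t (prod_list ys ^ t * f)"
    by (rule in_ideal_dvd_functional[OF t L_add]) (use rels powers in auto)
  then show False using witness by blast
qed

section \<open>The terms of the Pfaffian\<close>

text \<open>The variables occurring in Y A B C:\<close>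

definition witness_var :: "nat \<Rightarrow> nat \<Rightarrow> bool" where
  "witness_var i j \<longleftrightarrow>
     i = 0 \<or> (i = 1 \<and> (j = 2 \<or> j = 3)) \<or> (i = 2 \<and> j = 3) \<or> (4 \<le> i \<and> even i \<and> j = Suc i)"

lemma finite_pfaff_perms: "finite (pfaff_perms n)"
  by (rule finite_subset[of _ "{\<sigma>. \<sigma> permutes {..<n}}"])
     (auto simp: pfaff_perms_def finite_permutations)

context
  fixes n :: nat and \<sigma> :: "nat \<Rightarrow> nat"
  assumes \<sigma>: "\<sigma> \<in> pfaff_perms n" and even_n: "even n"
begin

lemma pfaff_perm_permutes: "\<sigma> permutes {..<n}"
  using \<sigma> by (simp add: pfaff_perms_def)

lemma pfaff_perm_eq_iff: "\<sigma> i = \<sigma> j \<longleftrightarrow> i = j"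
  using permutes_inj[OF pfaff_perm_permutes] by (auto dest: injD)

lemma pfaff_perm_less: "k < n div 2 \<Longrightarrow> \<sigma> (2 * k) < \<sigma> (2 * k + 1)"
  using \<sigma> by (simp add: pfaff_perms_def)

lemma pfaff_perm_le:
  assumes "2 * k \<le> j" "j < n"
  shows "\<sigma> (2 * k) \<le> \<sigma> j"
proof -
  have chain: "\<sigma> (2 * k) \<le> \<sigma> (2 * k')" if "k \<le> k'" "k' < n div 2" for k'
    using that
  proof (induction k' rule: dec_induct)
    case (step m)
    then show ?case
      using \<sigma> by (fastforce simp: pfaff_perms_def algebra_simps)
  qed simp
  have "j div 2 < n div 2" using assms even_n by auto
  then show ?thesis
    using chain[of "j div 2"] pfaff_perm_less[of "j div 2"] assms
    by (cases "even j") (auto elim!: evenE oddE)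
qed

lemma pfaff_perm_le_value:
  assumes "v < n" "v \<notin> \<sigma> ` {..<2 * k}"
  shows "\<sigma> (2 * k) \<le> v"
proof -
  obtain j where "j < n" "\<sigma> j = v"
    using assms(1) permutes_surj[OF pfaff_perm_permutes] permutes_not_in[OF pfaff_perm_permutes]
    by (metis lessThan_iff surj_def)
  then show ?thesis
    using assms(2) pfaff_perm_le[of k j] by (metis image_eqI lessThan_iff not_le)
qed

lemma pfaff_perm_0: "0 < n \<Longrightarrow> \<sigma> 0 = 0"
  using pfaff_perm_le_value[of 0 0] by simp

lemma pfaff_perm_even_index:
  assumes "\<sigma> ` {..<2 * k} = {..<2 * k}" "2 * k < n"
  shows "\<sigma> (2 * k) = 2 * k"
proof -
  have "\<sigma> (2 * k) \<notin> \<sigma> ` {..<2 * k}"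
    by (auto simp: pfaff_perm_eq_iff)
  then show ?thesis
    using pfaff_perm_le_value[of "2 * k" k] assms by auto
qed

lemma pfaff_perm_fixed_pair:
  assumes "\<sigma> ` {..<2 * k} = {..<2 * k}" "2 \<le> k" "k < n div 2"
    and "witness_var (\<sigma> (2 * k)) (\<sigma> (2 * k + 1))"
  shows "\<sigma> (2 * k) = 2 * k \<and> \<sigma> (2 * k + 1) = 2 * k + 1"
proof -
  have "\<sigma> (2 * k) = 2 * k"
    using pfaff_perm_even_index assms(1,3) even_n by auto
  then show ?thesis
    using assms(2,4) by (auto simp: witness_var_def)
qed

lemma pfaff_perm_tail:
  assumes head: "\<sigma> ` {..<4} = {..<4}"
    and wit: "\<And>k. k < n div 2 \<Longrightarrow> witness_var (\<sigma> (2 * k)) (\<sigma> (2 * k + 1))"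
    and "4 \<le> i"
  shows "\<sigma> i = i"
proof (cases "i < n")
  case True
  have img: "\<sigma> ` {..<2 * k} = {..<2 * k}" if "2 \<le> k" "k \<le> n div 2" for k
    using that
  proof (induction k rule: dec_induct)
    case base
    then show ?case using head by simp
  next
    case (step k)
    then have IH: "\<sigma> ` {..<2 * k} = {..<2 * k}"
      by simp
    then have "\<sigma> (2 * k) = 2 * k \<and> \<sigma> (2 * k + 1) = 2 * k + 1"
      using pfaff_perm_fixed_pair wit step by simp
    moreover have "{..<2 * Suc k} = insert (2 * k) (insert (2 * k + 1) {..<2 * k})"
      by auto
    ultimately show ?case using IH by simp
  qed
  have "\<sigma> (2 * (i div 2)) = 2 * (i div 2) \<and> \<sigma> (2 * (i div 2) + 1) = 2 * (i div 2) + 1"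
    using True even_n assms(3) img[of "i div 2"] wit[of "i div 2"]
    by (intro pfaff_perm_fixed_pair) auto
  then show ?thesis
    by (cases "even i") (auto elim!: evenE oddE)
next
  case False
  then show ?thesis
    using permutes_not_in[OF pfaff_perm_permutes] by simp
qed

lemma pfaff_perm_head:
  assumes "4 \<le> n"
    and wit: "\<And>k. k < n div 2 \<Longrightarrow> witness_var (\<sigma> (2 * k)) (\<sigma> (2 * k + 1))"
  shows "(\<sigma> 1, \<sigma> 2, \<sigma> 3) \<in> {(1, 2, 3), (2, 1, 3), (3, 1, 2)}"
proof -
  have s0: "\<sigma> 0 = 0"
    using pfaff_perm_0 assms(1) by simp
  have "\<sigma> 2 \<le> 2"
  proof -
    define v where "v = (if \<sigma> 1 = 1 then 2 else 1 :: nat)"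
    have v: "v \<in> {1, 2}" "v \<noteq> \<sigma> 1" by (auto simp: v_def)
    then have "v \<notin> \<sigma> ` {..<2 * 1}"
      using s0 by (auto simp: lessThan_Suc numeral_2_eq_2)
    then show ?thesis
      using pfaff_perm_le_value[of v 1] v assms(1) by auto
  qed
  moreover have "\<sigma> 2 \<noteq> 0"
    using s0 pfaff_perm_eq_iff[of 2 0] by simp
  moreover have "witness_var (\<sigma> 2) (\<sigma> 3)" "\<sigma> 2 < \<sigma> 3"
    using wit[of 1] pfaff_perm_less[of 1] assms(1) by auto
  ultimately have s23: "(\<sigma> 2, \<sigma> 3) \<in> {(1, 2), (1, 3), (2, 3)}"
    by (auto simp: witness_var_def)
  txt \<open>Otherwise the value r in {1, 2, 3} missed by \<open>\<sigma> 2\<close> and \<open>\<sigma> 3\<close> is \<open>\<sigma> 4\<close>,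
    and no witness variable is left to pair it with.\<close>
  have "\<sigma> 1 \<le> 3"
  proof (rule ccontr)
    assume big: "\<not> \<sigma> 1 \<le> 3"
    define r where "r = 6 - \<sigma> 2 - \<sigma> 3"
    have r: "r \<in> {1, 2, 3}" "r \<noteq> \<sigma> 2" "r \<noteq> \<sigma> 3"
      using s23 by (auto simp: r_def)
    have n6: "2 < n div 2"
      using big even_n pfaff_perm_permutes[THEN permutes_in_image, of 1] assms(1)
      by (auto elim!: evenE)
    have "r \<notin> \<sigma> ` {..<2 * 2}"
      using r s0 big by (auto simp: lessThan_Suc numeral_eq_Suc)
    then have "\<sigma> 4 \<le> r"
      using pfaff_perm_le_value[of r 2] r n6 by auto
    moreover have "\<sigma> 4 \<noteq> \<sigma> 0" "\<sigma> 4 \<noteq> \<sigma> 2" "\<sigma> 4 \<noteq> \<sigma> 3"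
      by (simp_all add: pfaff_perm_eq_iff)
    ultimately have s4: "\<sigma> 4 = r"
      using r s0 s23 by auto
    have "witness_var r (\<sigma> 5)" "r < \<sigma> 5"
      using wit[of 2] pfaff_perm_less[of 2] n6 s4 by auto
    then have "\<sigma> 5 = \<sigma> 2 \<or> \<sigma> 5 = \<sigma> 3"
      using r s23 by (auto simp: witness_var_def)
    then show False
      by (simp add: pfaff_perm_eq_iff)
  qed
  moreover have "\<sigma> 1 \<noteq> \<sigma> 0" "\<sigma> 1 \<noteq> \<sigma> 2" "\<sigma> 1 \<noteq> \<sigma> 3"
    by (simp_all add: pfaff_perm_eq_iff)
  ultimately show ?thesis
    using s0 s23 by auto
qed

end

definition tau1 :: "nat \<Rightarrow> nat" where "tau1 = id"
definition tau2 :: "nat \<Rightarrow> nat" where "tau2 = transpose 1 2"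
definition tau3 :: "nat \<Rightarrow> nat" where "tau3 = transpose 2 3 \<circ> transpose 1 2"

text \<open>Stated with \<open>Suc 0\<close> rather than \<open>1\<close>, since \<open>One_nat_def\<close> is a simp rule.\<close>

lemma tau_simps [simp]:
  "tau1 i = i"
  "tau2 0 = 0" "tau2 (Suc 0) = 2" "tau2 2 = 1" "tau2 3 = 3"
  "tau3 0 = 0" "tau3 (Suc 0) = 3" "tau3 2 = 1" "tau3 3 = 2"
  "4 \<le> i \<Longrightarrow> tau2 i = i" "4 \<le> i \<Longrightarrow> tau3 i = i"
  by (auto simp: tau1_def tau2_def tau3_def transpose_def)

lemma sign_taus: "sign tau1 = 1" "sign tau2 = -1" "sign tau3 = 1"
  by (simp_all add: tau1_def tau2_def tau3_def sign_swap_id sign_compose permutation_swap_id)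

lemma taus_distinct: "tau1 \<noteq> tau2" "tau1 \<noteq> tau3" "tau2 \<noteq> tau3"
proof -
  have "tau1 1 \<noteq> tau2 1" "tau1 1 \<noteq> tau3 1" "tau2 1 \<noteq> tau3 1"
    by simp_all
  then show "tau1 \<noteq> tau2" "tau1 \<noteq> tau3" "tau2 \<noteq> tau3"
    by metis+
qed

lemma taus_in_pfaff_perms:
  assumes "4 \<le> n"
  shows "tau1 \<in> pfaff_perms n" "tau2 \<in> pfaff_perms n" "tau3 \<in> pfaff_perms n"
proof -
  have pfaff_permsI: "\<tau> \<in> pfaff_perms n"
    if "\<tau> permutes {..<n}" "\<tau> 0 = 0" "0 < \<tau> 1" "0 < \<tau> 2" "\<tau> 2 < \<tau> 3" "\<tau> 2 < 4"
      "\<And>i. 4 \<le> i \<Longrightarrow> \<tau> i = i" for \<tau>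
    unfolding pfaff_perms_def
  proof (intro CollectI conjI allI impI)
    fix k :: nat
    consider "k = 0" | "k = 1" | "k \<ge> 2" by linarith
    then show "\<tau> (2 * k) < \<tau> (2 * k + 1)" "\<tau> (2 * k) < \<tau> (2 * k + 2)"
      using that by (cases; simp add: numeral_eq_Suc)+
  qed fact
  have "tau2 permutes {..<n}" "tau3 permutes {..<n}"
    unfolding tau2_def tau3_def using assms
    by (auto intro!: permutes_compose permutes_swap_id)
  moreover have "tau1 permutes {..<n}"
    by (simp add: tau1_def permutes_id)
  ultimately show "tau1 \<in> pfaff_perms n" "tau2 \<in> pfaff_perms n" "tau3 \<in> pfaff_perms n"
    by (auto intro!: pfaff_permsI)
qed

lemma pfaff_perm_witness_cases:
  assumes \<sigma>: "\<sigma> \<in> pfaff_perms n" and "even n" "4 \<le> n"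
    and wit: "\<And>k. k < n div 2 \<Longrightarrow> witness_var (\<sigma> (2 * k)) (\<sigma> (2 * k + 1))"
  shows "\<sigma> \<in> {tau1, tau2, tau3}"
proof -
  have s0: "\<sigma> 0 = 0"
    using pfaff_perm_0[OF \<sigma> assms(2)] assms(3) by simp
  have head: "(\<sigma> 1, \<sigma> 2, \<sigma> 3) \<in> {(1, 2, 3), (2, 1, 3), (3, 1, 2)}"
    by (rule pfaff_perm_head[OF \<sigma> assms(2,3) wit])
  have "{..<4::nat} = {0, 1, 2, 3}"
    by auto
  moreover have "{\<sigma> 1, \<sigma> 2, \<sigma> 3} = {1, 2, 3}"
    using head by auto
  ultimately have "\<sigma> ` {..<4} = {..<4}"
    using s0 by simp
  then have tail: "\<sigma> i = i" if "4 \<le> i" for i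
    by (rule pfaff_perm_tail[OF \<sigma> assms(2) _ wit that])
  have eq_tau: "\<sigma> = \<tau>" if "\<sigma> 1 = \<tau> 1" "\<sigma> 2 = \<tau> 2" "\<sigma> 3 = \<tau> 3" "\<tau> 0 = 0"
    "\<And>i. 4 \<le> i \<Longrightarrow> \<tau> i = i" for \<tau>
  proof
    fix i :: nat
    consider "i = 0" | "i = 1" | "i = 2" | "i = 3" | "4 \<le> i" by linarith
    then show "\<sigma> i = \<tau> i" using that s0 tail by cases simp_all
  qed
  from head consider "\<sigma> 1 = 1" "\<sigma> 2 = 2" "\<sigma> 3 = 3" | "\<sigma> 1 = 2" "\<sigma> 2 = 1" "\<sigma> 3 = 3"
    | "\<sigma> 1 = 3" "\<sigma> 2 = 1" "\<sigma> 3 = 2"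
    by auto
  then show ?thesis
  proof cases
    case 1
    then have "\<sigma> = tau1" by (intro eq_tau) simp_all
    then show ?thesis by simp
  next
    case 2
    then have "\<sigma> = tau2" by (intro eq_tau) simp_all
    then show ?thesis by simp
  next
    case 3
    then have "\<sigma> = tau3" by (intro eq_tau) simp_all
    then show ?thesis by simp
  qed
qed

definition pf_mono :: "nat \<Rightarrow> (nat \<Rightarrow> nat) \<Rightarrow> mono" where
  "pf_mono n \<sigma> = (\<Sum>k<n div 2. Poly_Mapping.single (\<sigma> (2 * k), \<sigma> (2 * k + 1)) 1)"

lemma pfX_eq_sum_single:
  "pfX n = (\<Sum>\<sigma>\<in>pfaff_perms n. Poly_Mapping.single (pf_mono n \<sigma>) (sign \<sigma>))"
proof -
  have "of_int (sign \<sigma>) * (\<Prod>k<n div 2. Xvar (\<sigma> (2 * k)) (\<sigma> (2 * k + 1)))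
          = Poly_Mapping.single (pf_mono n \<sigma>) (sign \<sigma>)" for \<sigma>
    by (simp add: Xvar_def pf_mono_def prod_single_one mult_single flip: single_of_int)
  then show ?thesis
    by (simp add: pfX_def)
qed

lemma lookup_pf_mono:
  "Poly_Mapping.lookup (pf_mono n \<sigma>) x
     = (\<Sum>k<n div 2. if (\<sigma> (2 * k), \<sigma> (2 * k + 1)) = x then 1 else 0)"
  unfolding pf_mono_def lookup_sum by (auto simp: lookup_single when_def intro!: sum.cong)

lemma lookup_pf_mono_pair_pos:
  assumes "k < n div 2"
  shows "0 < Poly_Mapping.lookup (pf_mono n \<sigma>) (\<sigma> (2 * k), \<sigma> (2 * k + 1))"
  unfolding lookup_pf_mono by (rule sum_pos2[of _ k]) (use assms in auto)

lemma pfaff_perm_witness_cases_mono: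
  assumes "\<sigma> \<in> pfaff_perms n" "even n" "4 \<le> n"
    and le: "\<And>x. Poly_Mapping.lookup (pf_mono n \<sigma>) x \<le> Poly_Mapping.lookup m x"
    and supp: "\<And>i j. Poly_Mapping.lookup m (i, j) \<noteq> 0 \<Longrightarrow> witness_var i j"
  shows "\<sigma> \<in> {tau1, tau2, tau3}"
proof (rule pfaff_perm_witness_cases[OF assms(1-3)])
  fix k
  assume "k < n div 2"
  then show "witness_var (\<sigma> (2 * k)) (\<sigma> (2 * k + 1))"
    using lookup_pf_mono_pair_pos[of k n \<sigma>] le supp by (metis gr_implies_not0 le_zero_eq)
qed

lemma lookup_pf_mono_tau:
  assumes "\<tau> \<in> {tau1, tau2, tau3}" "even n" "4 \<le> n"
  shows "Poly_Mapping.lookup (pf_mono n \<tau>) (i, j)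
     = (if (\<tau> 0, \<tau> 1) = (i, j) then 1 else 0) + (if (\<tau> 2, \<tau> 3) = (i, j) then 1 else 0)
       + (if 4 \<le> i \<and> even i \<and> j = Suc i \<and> j < n then 1 else 0)"
proof -
  have fix4: "\<tau> x = x" if "4 \<le> x" for x
    using assms(1) that by auto
  have "{..<n div 2} = insert 0 (insert 1 {2..<n div 2})"
    using assms(3) by auto
  moreover have "(\<Sum>k\<in>{2..<n div 2}. if (\<tau> (2 * k), \<tau> (2 * k + 1)) = (i, j) then 1 else 0)
      = (\<Sum>k\<in>{2..<n div 2}. if k = i div 2 then (if even i \<and> j = Suc i then 1 else 0) else (0::nat))"
    by (rule sum.cong) (auto simp: fix4)
  moreover have "\<dots> = (if 4 \<le> i \<and> even i \<and> j = Suc i \<and> j < n then 1 else 0)"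
    using assms(2) by (auto elim!: evenE)
  ultimately show ?thesis
    by (simp add: lookup_pf_mono)
qed

lemma witness_var_of_lookup_pf_mono_tau:
  assumes "\<tau> \<in> {tau1, tau2, tau3}" "even n" "4 \<le> n"
    and "Poly_Mapping.lookup (pf_mono n \<tau>) (i, j) \<noteq> 0"
  shows "witness_var i j"
  using assms by (auto simp: lookup_pf_mono_tau witness_var_def split: if_splits)

lemma pf_mono_eq_tau2_iff:
  assumes "\<sigma> \<in> pfaff_perms n" "even n" "4 \<le> n"
  shows "pf_mono n \<sigma> = pf_mono n tau2 \<longleftrightarrow> \<sigma> = tau2"
proof
  assume eq: "pf_mono n \<sigma> = pf_mono n tau2"
  have "\<sigma> \<in> {tau1, tau2, tau3}"
    using witness_var_of_lookup_pf_mono_tau[OF _ assms(2,3), of tau2]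
    by (intro pfaff_perm_witness_cases_mono[OF assms]) (auto simp: eq)
  moreover have "pf_mono n tau1 \<noteq> pf_mono n tau2" "pf_mono n tau3 \<noteq> pf_mono n tau2"
    using assms(2,3) by (auto simp: poly_mapping_eq_iff fun_eq_iff lookup_pf_mono_tau
        intro!: exI[of _ "(2, 3)"] exI[of _ "(1, 2)"])
  ultimately show "\<sigma> = tau2"
    using eq by auto
qed simp

definition y_mono :: "nat \<Rightarrow> mono" where
  "y_mono n = (\<Sum>j\<in>{1..<n}. Poly_Mapping.single (0, j) 1)"

lemma lookup_y_mono:
  "Poly_Mapping.lookup (y_mono n) (i, j) = (if i = 0 \<and> 1 \<le> j \<and> j < n then 1 else 0)"
  by (cases "i = 0") (simp_all add: y_mono_def lookup_sum lookup_single when_def)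

lemma prod_list_Xvar: "prod_list (map (\<lambda>j. Xvar 0 j) [1..<n]) = Poly_Mapping.single (y_mono n) 1"
  by (simp add: Xvar_def y_mono_def prod_single_one flip: prod.distinct_set_conv_list)

text \<open>The exponent vector of Y^t A^a B^b C^c:\<close>

definition witness_mono :: "nat \<Rightarrow> nat \<Rightarrow> nat \<Rightarrow> nat \<Rightarrow> nat \<Rightarrow> mono" where
  "witness_mono n t a b c = mono_scale t (y_mono n) + mono_scale a (pf_mono n tau1)
     + mono_scale b (pf_mono n tau2) + mono_scale c (pf_mono n tau3)"

lemma witness_mono_Suc:
  "witness_mono n t (Suc a) b c = witness_mono n t a b c + pf_mono n tau1"
  "witness_mono n t a (Suc b) c = witness_mono n t a b c + pf_mono n tau2"
  "witness_mono n t a b (Suc c) = witness_mono n t a b c + pf_mono n tau3"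
  by (simp_all add: witness_mono_def mono_scale_Suc ac_simps)

lemma witness_mono_eq_add_y_mono:
  "witness_mono n t a b c = witness_mono n 0 a b c + mono_scale t (y_mono n)"
  by (simp add: witness_mono_def ac_simps)

context
  fixes n :: nat
  assumes even_n: "even n" and n4: "4 \<le> n"
begin

lemma lookup_witness_mono_first_row:
  assumes "1 \<le> j" "j < n"
  shows "Poly_Mapping.lookup (witness_mono n t a b c) (0, j)
           = t + (if j = 1 then a else 0) + (if j = 2 then b else 0) + (if j = 3 then c else 0)"
  using assms even_n n4 by (simp add: witness_mono_def lookup_add lookup_y_mono lookup_pf_mono_tau)

lemma lookup_witness_mono_inner:
  "Poly_Mapping.lookup (witness_mono n t a b c) (2, 3) = a"
  "Poly_Mapping.lookup (witness_mono n t a b c) (1, 3) = b"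
  "Poly_Mapping.lookup (witness_mono n t a b c) (1, 2) = c"
  using even_n n4 by (simp_all add: witness_mono_def lookup_add lookup_y_mono lookup_pf_mono_tau)

lemma witness_var_of_lookup_witness_mono:
  assumes "Poly_Mapping.lookup (witness_mono n t a b c) (i, j) \<noteq> 0"
  shows "witness_var i j"
  using assms witness_var_of_lookup_pf_mono_tau[OF _ even_n n4, of _ i j]
  by (auto simp: witness_mono_def lookup_add lookup_y_mono witness_var_def split: if_splits)

lemma lookup_mult_pf_mono_tau1:
  fixes F :: zpoly
  shows "Poly_Mapping.lookup (F * Poly_Mapping.single (pf_mono n tau1) s) (witness_mono n t a b c)
     = (if a = 0 then 0 else Poly_Mapping.lookup F (witness_mono n t (a - 1) b c) * s)"
proof (cases a)
  case 0
  have "Poly_Mapping.lookup (witness_mono n t 0 b c) (2, 3) < Poly_Mapping.lookup (pf_mono n tau1) (2, 3)"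
    using even_n n4 lookup_witness_mono_inner by (simp add: lookup_pf_mono_tau)
  then have "Poly_Mapping.lookup (F * Poly_Mapping.single (pf_mono n tau1) s) (witness_mono n t 0 b c) = 0"
    by (rule lookup_mult_single_eq_zero)
  with 0 show ?thesis
    by simp
qed (simp add: witness_mono_Suc lookup_mult_single_add)

lemma lookup_mult_pf_mono_tau2:
  fixes F :: zpoly
  shows "Poly_Mapping.lookup (F * Poly_Mapping.single (pf_mono n tau2) s) (witness_mono n t a b c)
     = (if b = 0 then 0 else Poly_Mapping.lookup F (witness_mono n t a (b - 1) c) * s)"
proof (cases b)
  case 0
  have "Poly_Mapping.lookup (witness_mono n t a 0 c) (1, 3) < Poly_Mapping.lookup (pf_mono n tau2) (1, 3)"
    using even_n n4 lookup_witness_mono_inner by (simp add: lookup_pf_mono_tau)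
  then have "Poly_Mapping.lookup (F * Poly_Mapping.single (pf_mono n tau2) s) (witness_mono n t a 0 c) = 0"
    by (rule lookup_mult_single_eq_zero)
  with 0 show ?thesis
    by simp
qed (simp add: witness_mono_Suc lookup_mult_single_add)

lemma lookup_mult_pf_mono_tau3:
  fixes F :: zpoly
  shows "Poly_Mapping.lookup (F * Poly_Mapping.single (pf_mono n tau3) s) (witness_mono n t a b c)
     = (if c = 0 then 0 else Poly_Mapping.lookup F (witness_mono n t a b (c - 1)) * s)"
proof (cases c)
  case 0
  have "Poly_Mapping.lookup (witness_mono n t a b 0) (1, 2) < Poly_Mapping.lookup (pf_mono n tau3) (1, 2)"
    using even_n n4 lookup_witness_mono_inner by (simp add: lookup_pf_mono_tau)
  then have "Poly_Mapping.lookup (F * Poly_Mapping.single (pf_mono n tau3) s) (witness_mono n t a b 0) = 0"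
    by (rule lookup_mult_single_eq_zero)
  with 0 show ?thesis
    by simp
qed (simp add: witness_mono_Suc lookup_mult_single_add)

end

section \<open>The witness functional\<close>

definition witness_functional :: "nat \<Rightarrow> nat \<Rightarrow> nat \<Rightarrow> zpoly \<Rightarrow> int" where
  "witness_functional n p t G =
     (\<Sum>b\<le>p. int b * Poly_Mapping.lookup G (witness_mono n t 0 b (p - b)))
     + (\<Sum>b<p. Poly_Mapping.lookup G (witness_mono n t 1 b (p - 1 - b)))"

lemma witness_functional_add:
  "witness_functional n p t (G + H) = witness_functional n p t G + witness_functional n p t H"
  by (simp add: witness_functional_def lookup_add sum.distrib algebra_simps)

lemma witness_functional_diff:
  "witness_functional n p t (G - H) = witness_functional n p t G - witness_functional n p t H"
  using witness_functional_add[of n p t "G - H" H] by simp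

lemma witness_functional_0 [simp]: "witness_functional n p t 0 = 0"
  by (simp add: witness_functional_def)

lemma witness_functional_sum:
  "witness_functional n p t (\<Sum>a\<in>A. G a) = (\<Sum>a\<in>A. witness_functional n p t (G a))"
  by (induction A rule: infinite_finite_induct) (simp_all add: witness_functional_add)

lemma witness_functional_of_nat_mult:
  "witness_functional n p t (of_nat d * G) = int d * witness_functional n p t G"
  by (simp add: witness_functional_def lookup_of_nat_mult sum_distrib_left distrib_left
      mult.left_commute)

lemma witness_functional_mult_taus:
  fixes F :: zpoly
  assumes "even n" "4 \<le> n"
  shows "witness_functional n (Suc q) t (F * Poly_Mapping.single (pf_mono n tau1) 1)
       + witness_functional n (Suc q) t (F * Poly_Mapping.single (pf_mono n tau2) (-1))
       + witness_functional n (Suc q) t (F * Poly_Mapping.single (pf_mono n tau3) 1) = 0"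
proof -
  define g where "g b = Poly_Mapping.lookup F (witness_mono n t 0 b (q - b))" for b
  define h where "h b = Poly_Mapping.lookup F (witness_mono n t 1 b (q - Suc b))" for b
  have A: "witness_functional n (Suc q) t (F * Poly_Mapping.single (pf_mono n tau1) 1) = (\<Sum>b\<le>q. g b)"
    using assms
    by (simp add: witness_functional_def lookup_mult_pf_mono_tau1 g_def lessThan_Suc_atMost)
  have "(\<Sum>b\<le>q. int (Suc b) * (g b * -1)) = (\<Sum>b\<le>q. - g b - int b * g b)"
    by (rule sum.cong) (simp_all add: algebra_simps)
  then have B: "witness_functional n (Suc q) t (F * Poly_Mapping.single (pf_mono n tau2) (-1))
      = - (\<Sum>b\<le>q. g b) - (\<Sum>b\<le>q. int b * g b) - (\<Sum>b<q. h b)"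
    unfolding witness_functional_def lookup_mult_pf_mono_tau2[OF assms]
    by (simp only: sum.atMost_Suc_shift sum.lessThan_Suc_shift)
       (simp add: g_def[symmetric] h_def sum_negf sum_subtractf)
  have C: "witness_functional n (Suc q) t (F * Poly_Mapping.single (pf_mono n tau3) 1)
      = (\<Sum>b\<le>q. int b * g b) + (\<Sum>b<q. h b)"
    using assms
    by (simp add: witness_functional_def lookup_mult_pf_mono_tau3 sum.atMost_Suc sum.lessThan_Suc
        g_def h_def Suc_diff_le)
  show ?thesis
    unfolding A B C by (simp add: algebra_simps sum.distrib)
qed

lemma witness_functional_mult_pf_mono_other:
  fixes F :: zpoly
  assumes "\<sigma> \<in> pfaff_perms n" "even n" "4 \<le> n" "\<sigma> \<notin> {tau1, tau2, tau3}"
  shows "witness_functional n p t (F * Poly_Mapping.single (pf_mono n \<sigma>) s) = 0"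
proof -
  have "Poly_Mapping.lookup (F * Poly_Mapping.single (pf_mono n \<sigma>) s) (witness_mono n t a b c) = 0"
    for a b c
  proof -
    obtain x where "Poly_Mapping.lookup (witness_mono n t a b c) x < Poly_Mapping.lookup (pf_mono n \<sigma>) x"
      using pfaff_perm_witness_cases_mono[OF assms(1-3), of "witness_mono n t a b c"]
        witness_var_of_lookup_witness_mono[OF assms(2,3)] assms(4)
      by (meson not_le)
    then show ?thesis
      by (rule lookup_mult_single_eq_zero)
  qed
  then show ?thesis
    by (simp add: witness_functional_def)
qed

lemma witness_functional_mult_pfX:
  fixes F :: zpoly
  assumes "even n" "4 \<le> n" "0 < p"
  shows "witness_functional n p t (F * pfX n) = 0"
proof -
  obtain q where p: "p = Suc q"
    using assms(3) gr0_implies_Suc by blast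
  let ?T = "{tau1, tau2, tau3}"
  let ?w = "\<lambda>\<sigma>. witness_functional n p t (F * Poly_Mapping.single (pf_mono n \<sigma>) (sign \<sigma>))"
  have "witness_functional n p t (F * pfX n) = (\<Sum>\<sigma>\<in>pfaff_perms n. ?w \<sigma>)"
    by (simp add: pfX_eq_sum_single sum_distrib_left witness_functional_sum)
  also have "\<dots> = (\<Sum>\<sigma>\<in>?T. ?w \<sigma>)"
    using taus_in_pfaff_perms[OF assms(2)] witness_functional_mult_pf_mono_other assms
    by (intro sum.mono_neutral_right finite_pfaff_perms) auto
  also have "\<dots> = 0"
    using witness_functional_mult_taus[OF assms(1,2), of q t F] taus_distinct
    by (simp add: p sign_taus add.assoc)
  finally show ?thesis .
qed

lemma witness_functional_mult_Xvar_power: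
  fixes F :: zpoly
  assumes "even n" "4 \<le> n" "1 \<le> j" "j < n"
  shows "int p dvd witness_functional n p t (F * Xvar 0 j ^ (p + t))"
proof (cases "p = 1")
  case False
  let ?G = "F * Xvar 0 j ^ (p + t)"
  have vanish: "Poly_Mapping.lookup ?G (witness_mono n t a b c) = 0"
    if "Poly_Mapping.lookup (witness_mono n t a b c) (0, j) < p + t" for a b c
    using that by (simp add: Xvar_power lookup_mult_single_eq_zero[where k = "(0, j)"])
  have row: "Poly_Mapping.lookup (witness_mono n t a b c) (0, j)
      = t + (if j = 1 then a else 0) + (if j = 2 then b else 0) + (if j = 3 then c else 0)" for a b c
    using lookup_witness_mono_first_row[OF assms] .
  have "int p dvd int b * Poly_Mapping.lookup ?G (witness_mono n t 0 b (p - b))" if "b \<le> p" for b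
  proof (cases "b = 0 \<or> b = p")
    case False
    then show ?thesis
      using that vanish row by simp
  qed auto
  moreover have "Poly_Mapping.lookup ?G (witness_mono n t 1 b (p - 1 - b)) = 0" if "b < p" for b
    by (rule vanish) (use that \<open>p \<noteq> 1\<close> in \<open>simp add: row\<close>)
  ultimately show ?thesis
    unfolding witness_functional_def by (auto intro!: dvd_add dvd_sum)
qed simp

lemma witness_functional_y_mono_mult:
  "witness_functional n p t (Poly_Mapping.single (mono_scale t (y_mono n)) 1 * G)
     = witness_functional n p 0 G"
proof -
  have "Poly_Mapping.lookup (Poly_Mapping.single (mono_scale t (y_mono n)) 1 * G) (witness_mono n t a b c)
      = Poly_Mapping.lookup G (witness_mono n 0 a b c)" for a b c
    by (subst witness_mono_eq_add_y_mono) (simp add: mult.commute[of _ G] lookup_mult_single_add)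
  then show ?thesis
    by (simp add: witness_functional_def)
qed

lemma witness_functional_single_mono_scale:
  assumes "\<sigma> \<in> pfaff_perms n" "even n" "4 \<le> n" "2 \<le> p"
  shows "witness_functional n p 0 (Poly_Mapping.single (mono_scale p (pf_mono n \<sigma>)) s)
           = (if \<sigma> = tau2 then int p * s else 0)"
proof -
  let ?m = "mono_scale p (pf_mono n \<sigma>)"
  txt \<open>Compare the exponents of x_23 and x_13; on the left they are multiples of p.\<close>
  have no_tau1: "?m \<noteq> witness_mono n 0 1 b c" for b c
  proof
    assume "?m = witness_mono n 0 1 b c"
    then have "p * Poly_Mapping.lookup (pf_mono n \<sigma>) (2, 3) = 1"
      using lookup_witness_mono_inner(1)[OF assms(2,3)] by (metis lookup_mono_scale)
    then show False
      using assms(4) by simp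
  qed
  have no_mixed: "?m \<noteq> witness_mono n 0 0 b (p - b)" if "0 < b" "b < p" for b
  proof
    assume "?m = witness_mono n 0 0 b (p - b)"
    then have "p * Poly_Mapping.lookup (pf_mono n \<sigma>) (1, 3) = b"
      using lookup_witness_mono_inner(2)[OF assms(2,3)] by (metis lookup_mono_scale)
    then show False
      using that by (cases "Poly_Mapping.lookup (pf_mono n \<sigma>) (1, 3)") auto
  qed
  have "0 < p"
    using assms(4) by simp
  then have top: "?m = witness_mono n 0 0 p 0 \<longleftrightarrow> \<sigma> = tau2"
    by (simp add: witness_mono_def mono_scale_inj pf_mono_eq_tau2_iff[OF assms(1-3)])
  have "(\<Sum>b<p. int b * Poly_Mapping.lookup (Poly_Mapping.single ?m s) (witness_mono n 0 0 b (p - b))) = 0"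
    using no_mixed by (intro sum.neutral) (auto simp: lookup_single when_def)
  moreover have "{..p} = insert p {..<p}"
    by auto
  ultimately have "(\<Sum>b\<le>p. int b * Poly_Mapping.lookup (Poly_Mapping.single ?m s) (witness_mono n 0 0 b (p - b)))
      = (if \<sigma> = tau2 then int p * s else 0)"
    using top by (simp add: lookup_single when_def)
  moreover have "(\<Sum>b<p. Poly_Mapping.lookup (Poly_Mapping.single ?m s) (witness_mono n 0 1 b (p - 1 - b))) = 0"
    using no_tau1 by (simp add: lookup_single when_def)
  ultimately show ?thesis
    by (simp add: witness_functional_def)
qed

lemma witness_functional_frob_lift_pfX:
  assumes "even n" "4 \<le> n" "2 \<le> p"
  shows "witness_functional n p 0 (frob_lift p (pfX n)) = - int p"
proof -
  have "witness_functional n p 0 (frob_lift p (pfX n))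
      = (\<Sum>\<sigma>\<in>pfaff_perms n. witness_functional n p 0
           (Poly_Mapping.single (mono_scale p (pf_mono n \<sigma>)) (sign \<sigma>)))"
    by (simp add: pfX_eq_sum_single frob_lift_sum frob_lift_single witness_functional_sum)
  also have "\<dots> = (\<Sum>\<sigma>\<in>pfaff_perms n. if \<sigma> = tau2 then int p * sign \<sigma> else 0)"
    using assms by (intro sum.cong) (simp_all add: witness_functional_single_mono_scale)
  also have "\<dots> = - int p"
    using taus_in_pfaff_perms[OF assms(2)] finite_pfaff_perms by (simp add: sign_taus)
  finally show ?thesis .
qed

lemma witness_functional_p_deriv_pfX:
  assumes "prime p" "even n" "4 \<le> n"
  shows "witness_functional n p t (prod_list (map (\<lambda>j. Xvar 0 j) [1..<n]) ^ t * p_deriv p (pfX n)) = -1"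
proof -
  have p2: "2 \<le> p"
    using prime_ge_2_nat assms(1) by blast
  have pf_power: "pfX n ^ p = pfX n ^ (p - 1) * pfX n"
    using p2 by (simp add: power_eq_if)
  have "int p * witness_functional n p t (prod_list (map (\<lambda>j. Xvar 0 j) [1..<n]) ^ t * p_deriv p (pfX n))
      = witness_functional n p 0 (of_nat p * p_deriv p (pfX n))"
    unfolding prod_list_Xvar single_power
    by (simp add: witness_functional_y_mono_mult witness_functional_of_nat_mult)
  also have "\<dots> = witness_functional n p 0 (frob_lift p (pfX n))
                  - witness_functional n p 0 (pfX n ^ (p - 1) * pfX n)"
    by (simp add: of_nat_mult_p_deriv[OF assms(1)] pf_power witness_functional_diff)
  also have "\<dots> = int p * -1"
    using assms p2 by (simp add: witness_functional_frob_lift_pfX witness_functional_mult_pfX)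
  finally show ?thesis
    using p2 by (simp only: mult_cancel_left) simp
qed

section \<open>The class and its p-multiple\<close>

lemma frob_lift_pfX_in_ideal:
  assumes "even n" "0 < n" and gens: "\<And>j. 1 \<le> j \<Longrightarrow> j < n \<Longrightarrow> Xvar 0 j ^ p \<in> set gs"
  shows "in_ideal gs (frob_lift p (pfX n))"
proof -
  have "in_ideal gs (Poly_Mapping.single (mono_scale p (pf_mono n \<sigma>)) (sign \<sigma>))"
    if \<sigma>: "\<sigma> \<in> pfaff_perms n" for \<sigma>
  proof -
    define rest where
      "rest = (\<Sum>k\<in>{1..<n div 2}. Poly_Mapping.single (\<sigma> (2 * k), \<sigma> (2 * k + 1)) (1::nat))"
    have "{..<n div 2} = insert 0 {1..<n div 2}"
      using assms(1,2) by (auto elim!: evenE)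
    then have "pf_mono n \<sigma> = Poly_Mapping.single (0, \<sigma> 1) 1 + rest"
      using pfaff_perm_0[OF \<sigma> assms(1,2)] by (simp add: pf_mono_def rest_def)
    then have "Poly_Mapping.single (mono_scale p (pf_mono n \<sigma>)) (sign \<sigma>)
        = Poly_Mapping.single (mono_scale p rest) (sign \<sigma>) * Xvar 0 (\<sigma> 1) ^ p"
      by (simp add: mono_scale_add_right mono_scale_single Xvar_power mult_single add.commute)
    moreover have "1 \<le> \<sigma> 1" "\<sigma> 1 < n"
      using pfaff_perm_eq_iff[OF \<sigma> assms(1), of 1 0] pfaff_perm_0[OF \<sigma> assms(1,2)]
        permutes_in_image[OF pfaff_perm_permutes[OF \<sigma> assms(1)], of 1] assms(1,2)
      by (auto elim!: evenE)
    ultimately show ?thesis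
      using gens by (simp add: in_ideal_mult_member)
  qed
  then show ?thesis
    by (simp add: pfX_eq_sum_single frob_lift_sum frob_lift_single in_ideal_sum)
qed

lemma cech_class_zero_p_mult_p_deriv_pfX:
  assumes "prime p" "even n" "4 \<le> n"
  shows "cech_class_zero [pfX n] (map (\<lambda>j. Xvar 0 j) [1..<n]) (of_nat p * p_deriv p (pfX n)) p"
proof -
  let ?gs = "[pfX n] @ map (\<lambda>y. y ^ (p + 0)) (map (\<lambda>j. Xvar 0 j) [1..<n])"
  have "in_ideal ?gs (frob_lift p (pfX n))"
    using assms(2,3) by (intro frob_lift_pfX_in_ideal) auto
  moreover have "in_ideal ?gs (- (pfX n ^ (p - 1)) * pfX n)"
    by (rule in_ideal_mult_member) simp
  moreover have "pfX n ^ p = pfX n ^ (p - 1) * pfX n"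
    using prime_gt_0_nat[OF assms(1)] by (simp add: power_eq_if)
  ultimately have "in_ideal ?gs (of_nat p * p_deriv p (pfX n))"
    using in_ideal_add by (fastforce simp: of_nat_mult_p_deriv[OF assms(1)])
  then show ?thesis
    unfolding cech_class_zero_def by (intro exI[of _ 0]) simp
qed

lemma not_cech_class_zero_p_deriv_pfX:
  assumes "prime p" "even n" "4 \<le> n" "set rels \<subseteq> {pfX n, of_nat p}"
  shows "\<not> cech_class_zero rels (map (\<lambda>j. Xvar 0 j) [1..<n]) (p_deriv p (pfX n)) p"
proof (rule not_cech_class_zero_by_functional[where L = "witness_functional n p" and d = "int p"])
  show "int p dvd witness_functional n p t (F * g)" if "g \<in> set rels" for t F g
  proof -
    have "g = pfX n \<or> g = of_nat p"
      using that assms(4) by auto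
    then show ?thesis
      using assms prime_gt_0_nat[OF assms(1)]
      by (elim disjE) (simp_all add: witness_functional_mult_pfX mult.commute[of F "of_nat p"]
          witness_functional_of_nat_mult)
  qed
  show "int p dvd witness_functional n p t (F * y ^ (p + t))"
    if "y \<in> set (map (\<lambda>j. Xvar 0 j) [1..<n])" for t F y
    using that assms(2,3) by (auto simp: witness_functional_mult_Xvar_power)
  show "\<not> int p dvd witness_functional n p t
      (prod_list (map (\<lambda>j. Xvar 0 j) [1..<n]) ^ t * p_deriv p (pfX n))" for t
    using witness_functional_p_deriv_pfX[OF assms(1-3), of t] prime_gt_1_nat[OF assms(1)] by simp
qed (rule witness_functional_add)

theorem theorem6p2:
  fixes n p :: nat
  assumes "even n" and "n \<ge> 4" and "prime p"
  defines "ys \<equiv> map (\<lambda>j. Xvar 0 j) [1..<n]"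
  shows "\<not> cech_class_zero [pfX n] ys (p_deriv p (pfX n)) p
       \<and> cech_class_zero [pfX n] ys (of_nat p * p_deriv p (pfX n)) p
       \<and> \<not> cech_class_zero [pfX n, of_nat p] ys (p_deriv p (pfX n)) p
       \<and> (\<exists>f s. \<not> cech_class_zero [pfX n] ys f s
               \<and> cech_class_zero [pfX n] ys (of_nat p * f) s)"
proof -
  have "\<not> cech_class_zero [pfX n] ys (p_deriv p (pfX n)) p"
    and "\<not> cech_class_zero [pfX n, of_nat p] ys (p_deriv p (pfX n)) p"
    unfolding ys_def by (rule not_cech_class_zero_p_deriv_pfX[OF assms(3,1,2)]; simp)+
  moreover have "cech_class_zero [pfX n] ys (of_nat p * p_deriv p (pfX n)) p"
    unfolding ys_def by (rule cech_class_zero_p_mult_p_deriv_pfX[OF assms(3,1,2)])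
  ultimately show ?thesis
    by blast
qed

end
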